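(* Fix integers $k \ge 1$ and $n \ge 1$. For every database $D$ of $n$ rows and every neighboring database $D'$, $|\mathrm{SSA}(D) - \mathrm{SSA}(D')| \le 9 + 5/n$. That is, the sensitivity of $\mathrm{SSA}$ is at most $9 + 5/n$.
   Context: A database $D$ consists of $n$ rows. Each row is a pair $(g, y)$ with group label $g \in \{1,\dots,k\}$ and response value $y \in [0,1]$; the number of groups $k$ is fixed. For group $i$ let $n_i$ be the number of rows with label $i$, so $\sum_i n_i = n$. Let $\overline{y}_i$ be the mean response in group $i$, and let $\overline{y}$ be the mean of all $n$ responses; groups with $n_i = 0$ contribute nothing. Define $\mathrm{SSA}(D) = \sum_{i=1}^k n_i(\overline{y}_i - \overline{y})^2$. Two databases with $n$ rows each are neighboring if they differ in exactly one row; the changed row may have a different group label and/or a different response value. The sensitivity of a real-valued function $f$ on databases is $\max |f(D) - f(D')|$, taken over all neighboring pairs. *)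

theory Defs
  imports Complex_Main
begin

(* A database is a list of rows (g, y) with group label g and response y. *)
type_synonym database = "(nat \<times> real) list"

definition valid_db :: "nat \<Rightarrow> nat \<Rightarrow> database \<Rightarrow> bool" where
  "valid_db k n D \<longleftrightarrow> length D = n \<and>
     (\<forall>r \<in> set D. fst r \<in> {1..k} \<and> 0 \<le> snd r \<and> snd r \<le> 1)"

definition grp_count :: "database \<Rightarrow> nat \<Rightarrow> nat" where
  "grp_count D i = card {j. j < length D \<and> fst (D ! j) = i}"

(* mean response in group i (value irrelevant when the group is empty) *)
definition grp_mean :: "database \<Rightarrow> nat \<Rightarrow> real" where
  "grp_mean D i = (\<Sum>j | j < length D \<and> fst (D ! j) = i. snd (D ! j)) / real (grp_count D i)"

definition total_mean :: "database \<Rightarrow> real" where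
  "total_mean D = (\<Sum>j<length D. snd (D ! j)) / real (length D)"

definition SSA :: "nat \<Rightarrow> database \<Rightarrow> real" where
  "SSA k D = (\<Sum>i=1..k. real (grp_count D i) * (grp_mean D i - total_mean D)^2)"

definition neighboring :: "database \<Rightarrow> database \<Rightarrow> bool" where
  "neighboring D D' \<longleftrightarrow> length D = length D' \<and>
     card {j. j < length D \<and> D ! j \<noteq> D' ! j} = 1"

end

theory Submission
  imports Defs
begin

text \<open>Writing \<open>S\<^sub>i\<close> for the response sum of group \<open>i\<close> and \<open>T\<close> for the total sum,
  \<open>SSA = (\<Sum>\<^sub>i S\<^sub>i\<^sup>2 / n\<^sub>i) - T\<^sup>2 / n\<close>. Two neighbouring databases share the \<open>n - 1\<close> rows other
  than the changed one, and putting one row with response in \<open>[0,1]\<close> into a group with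
  \<open>S \<le> m\<close> changes \<open>S\<^sup>2 / m\<close> by an amount in \<open>[-1, 2]\<close>. So the first part of \<open>SSA\<close> moves by
  at most 3 between the two databases, while \<open>T\<close> moves by at most 1 inside \<open>[0, n]\<close>,
  so \<open>T\<^sup>2 / n\<close> moves by at most 2. Hence the sensitivity is at most 5.\<close>

lemma square_ratio_increment_le:
  fixes S m y :: real
  assumes "0 \<le> S" "S \<le> m" "0 \<le> y" "y \<le> 1"
  shows "(S + y)\<^sup>2 / (m + 1) - S\<^sup>2 / m \<le> 2"
proof -
  have "S\<^sup>2 / (m + 1) \<le> S\<^sup>2 / m"
    using assms by (cases "m = 0") (auto intro: divide_left_mono)
  moreover have "(S + y)\<^sup>2 / (m + 1) - S\<^sup>2 / (m + 1) = y * (2 * S + y) / (m + 1)"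
    by (simp add: diff_divide_distrib[symmetric] power2_eq_square algebra_simps)
  moreover have "y * (2 * S + y) / (m + 1) \<le> 1 * (2 * m + 2) / (m + 1)"
    using assms by (intro divide_right_mono mult_mono) auto
  moreover have "1 * (2 * m + 2) / (m + 1) = 2"
    using assms by (simp add: field_simps)
  ultimately show ?thesis by linarith
qed

lemma square_ratio_increment_ge:
  fixes S m y :: real
  assumes "0 \<le> S" "S \<le> m" "0 \<le> y" "y \<le> 1"
  shows "-1 \<le> (S + y)\<^sup>2 / (m + 1) - S\<^sup>2 / m"
proof (cases "m = 0")
  case True
  then have "(S + y)\<^sup>2 / (m + 1) - S\<^sup>2 / m = y\<^sup>2" using assms by simp
  then show ?thesis using zero_le_power2[of y] by linarith
next
  case False
  then have "m > 0" using assms by simp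
  have "S\<^sup>2 / (m + 1) \<le> (S + y)\<^sup>2 / (m + 1)"
    using assms by (intro divide_right_mono power_mono) auto
  moreover have "S\<^sup>2 / m - S\<^sup>2 / (m + 1) = S\<^sup>2 / (m * (m + 1))"
    using \<open>m > 0\<close> by (simp add: field_simps)
  moreover have "S\<^sup>2 \<le> m * (m + 1)"
  proof -
    have "S\<^sup>2 \<le> m\<^sup>2" using assms by (intro power_mono) auto
    then show ?thesis using \<open>m > 0\<close> by (simp add: power2_eq_square field_simps)
  qed
  then have "S\<^sup>2 / (m * (m + 1)) \<le> 1" using \<open>m > 0\<close> by simp
  ultimately show ?thesis by linarith
qed

lemma square_diff_div_le:
  fixes a b n :: real
  assumes "0 \<le> a" "a \<le> n" "0 \<le> b" "b \<le> n" "\<bar>a - b\<bar> \<le> 1"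
  shows "\<bar>a\<^sup>2 / n - b\<^sup>2 / n\<bar> \<le> 2"
proof (cases "n = 0")
  case False
  have "\<bar>a\<^sup>2 - b\<^sup>2\<bar> = \<bar>(a - b) * (a + b)\<bar>"
    by (simp add: power2_eq_square algebra_simps)
  also have "\<dots> = \<bar>a - b\<bar> * (a + b)"
    using assms by (simp add: abs_mult)
  also have "\<dots> \<le> 1 * (2 * n)"
    using assms by (intro mult_mono) auto
  moreover have "n > 0" using False assms by linarith
  ultimately have "\<bar>a\<^sup>2 - b\<^sup>2\<bar> / n \<le> 2" by (simp add: divide_le_eq)
  then show ?thesis using \<open>n > 0\<close> by (simp add: diff_divide_distrib[symmetric] abs_divide)
qed simp

text \<open>Group sizes and group sums restricted to a set \<open>A\<close> of row indices, so that a
  database with one row removed can be described without changing the list. An empty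
  group contributes \<open>0 / 0 = 0\<close> to \<open>square_ratio_sum\<close>, as it does to \<open>SSA\<close>.\<close>

definition group_size_on :: "database \<Rightarrow> nat set \<Rightarrow> nat \<Rightarrow> real" where
  "group_size_on D A i = (\<Sum>j\<in>A. if fst (D ! j) = i then 1 else 0)"

definition group_sum_on :: "database \<Rightarrow> nat set \<Rightarrow> nat \<Rightarrow> real" where
  "group_sum_on D A i = (\<Sum>j\<in>A. if fst (D ! j) = i then snd (D ! j) else 0)"

definition square_ratio_sum :: "nat \<Rightarrow> database \<Rightarrow> nat set \<Rightarrow> real" where
  "square_ratio_sum k D A = (\<Sum>i=1..k. (group_sum_on D A i)\<^sup>2 / group_size_on D A i)"

lemma sum_filter_lessThan:
  "(\<Sum>j | j < L \<and> P j. f j) = (\<Sum>j<(L::nat). if P j then f j else (0::'a::comm_monoid_add))"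
proof -
  have "{j. j < L \<and> P j} = {j\<in>{..<L}. P j}" by auto
  then show ?thesis by (simp add: sum.inter_filter[symmetric])
qed

lemma grp_count_eq_group_size_on: "real (grp_count D i) = group_size_on D {..<length D} i"
proof -
  have "real (grp_count D i) = (\<Sum>j | j < length D \<and> fst (D ! j) = i. 1)"
    unfolding grp_count_def by simp
  then show ?thesis unfolding sum_filter_lessThan group_size_on_def .
qed

lemma grp_mean_eq_group_sum_on:
  "grp_mean D i = group_sum_on D {..<length D} i / group_size_on D {..<length D} i"
  unfolding grp_mean_def grp_count_eq_group_size_on sum_filter_lessThan group_sum_on_def ..

lemma group_sum_on_bounds:
  assumes "\<And>j. j \<in> A \<Longrightarrow> 0 \<le> snd (D ! j) \<and> snd (D ! j) \<le> 1"
  shows "0 \<le> group_sum_on D A i" and "group_sum_on D A i \<le> group_size_on D A i"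
  using assms unfolding group_sum_on_def group_size_on_def
  by (auto intro!: sum_nonneg sum_mono)

lemma sum_group_sum_on:
  assumes "\<And>j. j \<in> A \<Longrightarrow> fst (D ! j) \<in> {1..k}"
  shows "(\<Sum>i=1..k. group_sum_on D A i) = (\<Sum>j\<in>A. snd (D ! j))"
proof -
  have "(\<Sum>i=1..k. group_sum_on D A i)
      = (\<Sum>j\<in>A. \<Sum>i=1..k. if fst (D ! j) = i then snd (D ! j) else 0)"
    unfolding group_sum_on_def by (rule sum.swap)
  also have "\<dots> = (\<Sum>j\<in>A. snd (D ! j))"
    using assms by (intro sum.cong) auto
  finally show ?thesis .
qed

lemma sum_group_size_on:
  assumes "\<And>j. j \<in> A \<Longrightarrow> fst (D ! j) \<in> {1..k}"
  shows "(\<Sum>i=1..k. group_size_on D A i) = real (card A)"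
proof -
  have "(\<Sum>i=1..k. group_size_on D A i)
      = (\<Sum>j\<in>A. \<Sum>i=1..k. if fst (D ! j) = i then (1::real) else 0)"
    unfolding group_size_on_def by (rule sum.swap)
  also have "\<dots> = (\<Sum>j\<in>A. 1)"
    using assms by (intro sum.cong) auto
  finally show ?thesis by simp
qed

lemma valid_db_nth:
  assumes "valid_db k n D" "j < n"
  shows "fst (D ! j) \<in> {1..k}" and "0 \<le> snd (D ! j)" and "snd (D ! j) \<le> 1"
  using assms unfolding valid_db_def by (metis nth_mem)+

lemma SSA_eq_square_ratio_sum:
  assumes v: "valid_db k n D" and "n \<ge> 1"
  shows "SSA k D = square_ratio_sum k D {..<n} - (\<Sum>j<n. snd (D ! j))\<^sup>2 / n"
proof -
  have len: "length D = n" using v unfolding valid_db_def by simp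
  define S where "S = group_sum_on D {..<n}"
  define m where "m = group_size_on D {..<n}"
  define T where "T = (\<Sum>j<n. snd (D ! j))"
  define \<mu> where "\<mu> = T / n"
  have term_eq: "real (grp_count D i) * (grp_mean D i - total_mean D)\<^sup>2
      = (S i)\<^sup>2 / m i - 2 * S i * \<mu> + m i * \<mu>\<^sup>2" for i
  proof (cases "m i = 0")
    case True
    then have "real (grp_count D i) = 0"
      unfolding grp_count_eq_group_size_on len m_def .
    moreover from True have "S i = 0"
      using group_sum_on_bounds[of "{..<n}" D i] valid_db_nth[OF v] unfolding S_def m_def
      by (metis lessThan_iff order_antisym)
    ultimately show ?thesis using True by simp
  next
    case False
    have "total_mean D = \<mu>" unfolding total_mean_def \<mu>_def T_def len ..
    then show ?thesis
      using False unfolding grp_count_eq_group_size_on grp_mean_eq_group_sum_on len S_def m_def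
      by (simp add: field_simps power2_eq_square)
  qed
  have sum_S: "(\<Sum>i=1..k. S i) = T" and sum_m: "(\<Sum>i=1..k. m i) = n"
    using sum_group_sum_on[of "{..<n}" D k] sum_group_size_on[of "{..<n}" D k]
      valid_db_nth(1)[OF v] unfolding S_def m_def T_def by auto
  have "SSA k D = square_ratio_sum k D {..<n} - 2 * (\<Sum>i=1..k. S i) * \<mu> + (\<Sum>i=1..k. m i) * \<mu>\<^sup>2"
    unfolding SSA_def term_eq square_ratio_sum_def S_def m_def
    by (simp add: sum.distrib sum_subtractf sum_distrib_left sum_distrib_right mult.assoc)
  also have "\<dots> = square_ratio_sum k D {..<n} - 2 * T * \<mu> + n * \<mu>\<^sup>2"
    unfolding sum_S sum_m ..
  also have "\<dots> = square_ratio_sum k D {..<n} - T\<^sup>2 / n"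
    unfolding \<mu>_def using \<open>n \<ge> 1\<close> by (simp add: field_simps power2_eq_square)
  finally show ?thesis unfolding T_def .
qed

lemma square_ratio_sum_remove_bounds:
  assumes v: "valid_db k n D" and j: "j < n"
  defines "\<Delta> \<equiv> square_ratio_sum k D {..<n} - square_ratio_sum k D ({..<n} - {j})"
  shows "-1 \<le> \<Delta>" and "\<Delta> \<le> 2"
proof -
  define A where "A = {..<n} - {j}"
  define g where "g = fst (D ! j)"
  define y where "y = snd (D ! j)"
  define S where "S = group_sum_on D A"
  define m where "m = group_size_on D A"
  have g: "g \<in> {1..k}" and y: "0 \<le> y" "y \<le> 1"
    using valid_db_nth[OF v j] unfolding g_def y_def by auto
  have Sm: "0 \<le> S g" "S g \<le> m g"
    using group_sum_on_bounds[of A D g] valid_db_nth[OF v] unfolding S_def m_def A_def by auto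
  have "(group_sum_on D {..<n} i)\<^sup>2 / group_size_on D {..<n} i - (S i)\<^sup>2 / m i
      = (if i = g then (S g + y)\<^sup>2 / (m g + 1) - (S g)\<^sup>2 / m g else 0)" for i
    using j unfolding group_sum_on_def group_size_on_def S_def m_def A_def g_def y_def
    by (simp add: sum.remove[of "{..<n}" j] add.commute)
  then have "\<Delta> = (\<Sum>i=1..k. if i = g then (S g + y)\<^sup>2 / (m g + 1) - (S g)\<^sup>2 / m g else 0)"
    unfolding \<Delta>_def square_ratio_sum_def sum_subtractf[symmetric] S_def m_def A_def by simp
  then have "\<Delta> = (S g + y)\<^sup>2 / (m g + 1) - (S g)\<^sup>2 / m g"
    using g by (simp add: sum.delta)
  then show "-1 \<le> \<Delta>" and "\<Delta> \<le> 2"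
    using square_ratio_increment_ge[OF Sm y] square_ratio_increment_le[OF Sm y] by simp_all
qed

lemma neighboring_single_index:
  assumes "neighboring D D'"
  obtains j where "j < length D" "\<And>i. i < length D \<Longrightarrow> i \<noteq> j \<Longrightarrow> D ! i = D' ! i"
proof -
  have "card {i. i < length D \<and> D ! i \<noteq> D' ! i} = 1"
    using assms unfolding neighboring_def by blast
  then obtain j where "{i. i < length D \<and> D ! i \<noteq> D' ! i} = {j}"
    by (metis card_1_singletonE)
  then show ?thesis using that by blast
qed

lemma square_ratio_sum_cong:
  assumes "\<And>j. j \<in> A \<Longrightarrow> D ! j = D' ! j"
  shows "square_ratio_sum k D A = square_ratio_sum k D' A"
proof -
  have "group_sum_on D A = group_sum_on D' A" and "group_size_on D A = group_size_on D' A"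
    using assms unfolding group_sum_on_def group_size_on_def by (auto intro!: ext sum.cong)
  then show ?thesis unfolding square_ratio_sum_def by simp
qed

theorem mainTheorem2:
  fixes k n :: nat and D D' :: database
  assumes "k \<ge> 1" and "n \<ge> 1"
    and "valid_db k n D" and "valid_db k n D'"
    and "neighboring D D'"
  shows "\<bar>SSA k D - SSA k D'\<bar> \<le> 9 + 5 / real n"
proof -
  have len: "length D = n" using assms(3) unfolding valid_db_def by simp
  obtain j where j: "j < n" and same: "\<And>i. i < n \<Longrightarrow> i \<noteq> j \<Longrightarrow> D ! i = D' ! i"
    using neighboring_single_index[OF assms(5)] len by metis
  have common: "square_ratio_sum k D ({..<n} - {j}) = square_ratio_sum k D' ({..<n} - {j})"
    using same by (intro square_ratio_sum_cong) auto
  define T where "T E = (\<Sum>i<n. snd (E ! i))" for E :: database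
  have T_bounds: "0 \<le> T E \<and> T E \<le> n" if "valid_db k n E" for E
    using sum_mono[of "{..<n}" "\<lambda>i. snd (E ! i)" "\<lambda>_. 1"] valid_db_nth[OF that]
    unfolding T_def by (auto intro: sum_nonneg)
  have T_split: "T E = snd (E ! j) + (\<Sum>i\<in>{..<n} - {j}. snd (E ! i))" for E
    unfolding T_def using j by (simp add: sum.remove)
  have "(\<Sum>i\<in>{..<n} - {j}. snd (D ! i)) = (\<Sum>i\<in>{..<n} - {j}. snd (D' ! i))"
    using same by (intro sum.cong) auto
  then have "\<bar>T D - T D'\<bar> \<le> 1"
    using T_split[of D] T_split[of D'] valid_db_nth[OF assms(3) j] valid_db_nth[OF assms(4) j]
    by linarith
  then have total: "\<bar>(T D)\<^sup>2 / n - (T D')\<^sup>2 / n\<bar> \<le> 2"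
    using T_bounds[OF assms(3)] T_bounds[OF assms(4)] by (intro square_diff_div_le) auto
  have "\<bar>SSA k D - SSA k D'\<bar> \<le> 5"
    using SSA_eq_square_ratio_sum[OF assms(3,2), folded T_def]
      SSA_eq_square_ratio_sum[OF assms(4,2), folded T_def]
      square_ratio_sum_remove_bounds[OF assms(3) j] square_ratio_sum_remove_bounds[OF assms(4) j]
      common total by linarith
  moreover have "0 \<le> 5 / real n" by simp
  ultimately show ?thesis by linarith
qed

end
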